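(* Let $a_2,a_3$ be integers with $1<a_2<a_3$ and $A=\{1,a_2,a_3\}$. Let $n$ and $p\ge 0$ be integers such that $SG(A,n,p)$ is a stride generator. If $SG(A,n,p)$ has a non-canonical break $y$ with break order $q$, then $n+q\le a_2$.
   Context: For integers $n$ and $i\ge 0$, an integer $x$ has an $n$-generation of order $i$ if there are integers $c_1,c_2\ge 0$ with $x+ia_3=c_2a_2+c_1$ and $c_1+c_2\le n+i$. For integers $n$ and $p\ge0$, $SG(A,n,p)$ is a stride generator if: (A) every integer $0\le x<a_3$ has an $n$-generation of some order $\le p$; (B) at least one integer $0\le x<a_3$ has no $n$-generation of order $<p$; (C) at least one integer $0\le y<a_3$ has no $(n-1)$-generation of any order $\le p+1$. Any $0\le y<a_3$ satisfying (C) is called a break. A break $y$ is canonical if there is no integer $j\ge 0$ with $y+ja_3=c_2a_2+c_1$, $c_1,c_2\ge 0$, $c_1+c_2\le (n-1)+j$; otherwise its break order is the smallest such $j$. *)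

theory Defs
  imports Main
begin

definition has_gen :: "int \<Rightarrow> int \<Rightarrow> int \<Rightarrow> nat \<Rightarrow> int \<Rightarrow> bool" where
  "has_gen a2 a3 n i x \<longleftrightarrow>
     (\<exists>c1 c2::int. c1 \<ge> 0 \<and> c2 \<ge> 0 \<and> x + int i * a3 = c2 * a2 + c1 \<and> c1 + c2 \<le> n + int i)"

definition is_break :: "int \<Rightarrow> int \<Rightarrow> int \<Rightarrow> nat \<Rightarrow> int \<Rightarrow> bool" where
  "is_break a2 a3 n p y \<longleftrightarrow>
     0 \<le> y \<and> y < a3 \<and> \<not> (\<exists>i \<le> p + 1. has_gen a2 a3 (n - 1) i y)"

definition stride_generator :: "int \<Rightarrow> int \<Rightarrow> int \<Rightarrow> nat \<Rightarrow> bool" where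
  "stride_generator a2 a3 n p \<longleftrightarrow>
     (\<forall>x. 0 \<le> x \<and> x < a3 \<longrightarrow> (\<exists>i \<le> p. has_gen a2 a3 n i x)) \<and>
     (\<exists>x. 0 \<le> x \<and> x < a3 \<and> \<not> (\<exists>i < p. has_gen a2 a3 n i x)) \<and>
     (\<exists>y. is_break a2 a3 n p y)"

definition canonical_break :: "int \<Rightarrow> int \<Rightarrow> int \<Rightarrow> nat \<Rightarrow> int \<Rightarrow> bool" where
  "canonical_break a2 a3 n p y \<longleftrightarrow>
     is_break a2 a3 n p y \<and> \<not> (\<exists>j. has_gen a2 a3 (n - 1) j y)"

definition break_order :: "int \<Rightarrow> int \<Rightarrow> int \<Rightarrow> int \<Rightarrow> nat" where
  "break_order a2 a3 n y = (LEAST j. has_gen a2 a3 (n - 1) j y)"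

end

theory Submission
  imports Defs
begin

text \<open>Write \<open>a = a2\<close> and \<open>w = a3 - a2\<close>. Since \<open>x + i*a3 = (x + i*w) + i*a\<close>, a nonnegative \<open>x\<close> has
  an \<open>n\<close>-generation of order \<open>i\<close> iff \<open>x + i*w\<close> is a sum of at most \<open>n\<close> coins of values \<open>1\<close> and \<open>a\<close>,
  and the greedy count \<open>(x + i*w) div a + (x + i*w) mod a\<close> is optimal. Along the break, the
  coin count of \<open>y + j*w\<close> stays at least \<open>n\<close> for \<open>j < q\<close> and drops below \<open>n\<close> at \<open>j = q\<close>.
  A drop of the coin count is only possible across a carry in the last base-\<open>a\<close> digit, so
  every multiple \<open>s*w\<close> spanned by the drop has few coins and a residue above that of the
  end point. These multiples have pairwise distinct residues, and their coin counts increase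
  with the residue; counting them bounds the length \<open>q\<close> of the drop by \<open>a - n\<close>.\<close>

definition coin_count :: "int \<Rightarrow> int \<Rightarrow> int" where
  "coin_count a z = z div a + z mod a"

lemma div_mod_add_no_carry:
  fixes a x z :: int
  assumes "a > 0" "x mod a + z mod a < a"
  shows "(x + z) mod a = x mod a + z mod a" "(x + z) div a = x div a + z div a"
proof -
  have "(x mod a + z mod a) div a = 0"
    using assms by (simp add: div_pos_pos_trivial)
  then show "(x + z) div a = x div a + z div a"
    using div_add1_eq[of x z a] by simp
  have "(x + z) mod a = (x mod a + z mod a) mod a" by (simp add: mod_add_eq)
  also have "\<dots> = x mod a + z mod a" using assms by (intro mod_pos_pos_trivial) auto
  finally show "(x + z) mod a = x mod a + z mod a" .
qed

lemma div_mod_add_carry: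
  fixes a x z :: int
  assumes "a > 0" "x mod a + z mod a \<ge> a"
  shows "(x + z) mod a = x mod a + z mod a - a" "(x + z) div a = x div a + z div a + 1"
proof -
  have "x mod a < a" "z mod a < a" using assms(1) by simp_all
  then have small: "0 \<le> x mod a + z mod a - a" "x mod a + z mod a - a < a"
    using assms(2) by linarith+
  have "(x mod a + z mod a) div a = (x mod a + z mod a - a) div a + 1"
    using assms by (simp add: div_pos_geq)
  also have "\<dots> = 1" using small by (simp add: div_pos_pos_trivial)
  finally show "(x + z) div a = x div a + z div a + 1"
    using div_add1_eq[of x z a] by simp
  have "(x + z) mod a = (x mod a + z mod a - a) mod a"
    by (simp add: mod_add_eq mod_diff_right_eq[symmetric])
  also have "\<dots> = x mod a + z mod a - a" using small by (intro mod_pos_pos_trivial)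
  finally show "(x + z) mod a = x mod a + z mod a - a" .
qed

lemma coin_count_add_no_carry:
  fixes a x z :: int
  assumes "a > 0" "x mod a + z mod a < a"
  shows "coin_count a (x + z) = coin_count a x + coin_count a z"
  using div_mod_add_no_carry[OF assms] by (simp add: coin_count_def)

lemma coin_count_add_carry:
  fixes a x z :: int
  assumes "a > 0" "x mod a + z mod a \<ge> a"
  shows "coin_count a (x + z) = coin_count a x + coin_count a z - (a - 1)"
  using div_mod_add_carry[OF assms] by (simp add: coin_count_def)

lemma coin_count_ge_mod:
  fixes a z :: int
  assumes "a > 0" "z \<ge> 0"
  shows "coin_count a z \<ge> z mod a"
  using assms by (simp add: coin_count_def pos_imp_zdiv_nonneg_iff)

lemma coin_count_small:
  fixes a z :: int
  assumes "0 \<le> z" "z < a"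
  shows "coin_count a z = z"
  using assms by (simp add: coin_count_def div_pos_pos_trivial mod_pos_pos_trivial)

lemma coin_count_add_multiple:
  fixes a z i :: int
  assumes "a > 0"
  shows "coin_count a (z + i * a) = coin_count a z + i"
  using assms by (simp add: coin_count_def)

lemma has_gen_iff_coin_count:
  fixes a2 a3 x n :: int and i :: nat
  assumes a2: "a2 > 0" and x: "x \<ge> 0" and a3: "a2 \<le> a3"
  shows "has_gen a2 a3 n i x \<longleftrightarrow> coin_count a2 (x + int i * (a3 - a2)) \<le> n"
proof -
  define N where "N = x + int i * a3"
  have N0: "N \<ge> 0" unfolding N_def using x a2 a3 by simp
  have coins_N: "coin_count a2 N = coin_count a2 (x + int i * (a3 - a2)) + int i"
    using coin_count_add_multiple[OF a2, of "x + int i * (a3 - a2)" "int i"]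
    by (simp add: N_def algebra_simps)
  show ?thesis
  proof
    assume "has_gen a2 a3 n i x"
    then obtain c1 c2 where c: "c1 \<ge> 0" "c2 \<ge> 0" "N = c2 * a2 + c1" "c1 + c2 \<le> n + int i"
      unfolding has_gen_def N_def by auto
    have "N div a2 = c2 + c1 div a2" "N mod a2 = c1 mod a2"
      using c(3) a2 by (simp_all add: algebra_simps)
    moreover have "c1 = a2 * (c1 div a2) + c1 mod a2" by simp
    moreover have "c1 div a2 \<le> a2 * (c1 div a2)"
      using mult_right_mono[of 1 a2 "c1 div a2"] a2 c(1) by (simp add: pos_imp_zdiv_nonneg_iff)
    ultimately have "coin_count a2 N \<le> c1 + c2" unfolding coin_count_def by linarith
    then show "coin_count a2 (x + int i * (a3 - a2)) \<le> n" using coins_N c(4) by simp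
  next
    assume "coin_count a2 (x + int i * (a3 - a2)) \<le> n"
    then show "has_gen a2 a3 n i x"
      unfolding has_gen_def
      by (intro exI[of _ "N mod a2"] exI[of _ "N div a2"])
        (use a2 N0 coins_N in \<open>auto simp: N_def coin_count_def pos_imp_zdiv_nonneg_iff\<close>)
  qed
qed

locale bounded_multiples =
  fixes a w Q :: int
  assumes a: "a \<ge> 2" and w: "w \<ge> 1"
    and bounded: "\<And>s. 1 \<le> s \<Longrightarrow> s \<le> Q \<Longrightarrow> 1 \<le> (s*w) mod a \<and> coin_count a (s*w) \<le> a - 2"
begin

lemma a_pos: "a > 0"
  using a by simp

lemma coin_count_split:
  assumes "1 \<le> s" "s < t" "t \<le> Q"
  shows "(t*w) mod a = (s*w) mod a + ((t-s)*w) mod a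
           \<and> coin_count a (t*w) = coin_count a (s*w) + coin_count a ((t-s)*w)
       \<or> (t*w) mod a = (s*w) mod a + ((t-s)*w) mod a - a
           \<and> coin_count a (t*w) = coin_count a (s*w) + coin_count a ((t-s)*w) - (a - 1)"
proof -
  have t: "t*w = s*w + (t-s)*w" by (simp add: algebra_simps)
  show ?thesis
  proof (cases "(s*w) mod a + ((t-s)*w) mod a < a")
    case True
    then show ?thesis
      using coin_count_add_no_carry[OF a_pos] div_mod_add_no_carry(1)[OF a_pos] t by simp
  next
    case False
    then show ?thesis
      using coin_count_add_carry[OF a_pos] div_mod_add_carry(1)[OF a_pos] t by simp
  qed
qed

lemma residues_distinct:
  assumes "1 \<le> s" "s \<le> Q" "1 \<le> t" "t \<le> Q" "s \<noteq> t"
  shows "(s*w) mod a \<noteq> (t*w) mod a"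
proof -
  have "(u*w) mod a \<noteq> (v*w) mod a" if "1 \<le> u" "u < v" "v \<le> Q" for u v
    using coin_count_split[OF that] bounded[of "v-u"] that a_pos
    by (smt (verit) pos_mod_bound)
  from this[of s t] this[of t s] show ?thesis using assms by linarith
qed

lemma coin_count_mono_residue:
  assumes "1 \<le> s" "s \<le> Q" "1 \<le> t" "t \<le> Q" "(s*w) mod a < (t*w) mod a"
  shows "coin_count a (s*w) < coin_count a (t*w)"
proof (cases "s < t")
  case True
  have "1 \<le> ((t-s)*w) mod a" "((t-s)*w) mod a < a"
    using bounded[of "t-s"] True assms a_pos by auto
  moreover have "coin_count a ((t-s)*w) \<ge> ((t-s)*w) mod a"
    using coin_count_ge_mod[OF a_pos] True w by simp
  ultimately show ?thesis using coin_count_split[OF assms(1) True assms(4)] assms(5) by auto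
next
  case False
  then have "t < s" using assms(5) by (cases "s = t") auto
  moreover have "1 \<le> ((s-t)*w) mod a" "coin_count a ((s-t)*w) \<le> a - 2"
    using bounded[of "s-t"] \<open>t < s\<close> assms by auto
  ultimately show ?thesis using coin_count_split[OF assms(3) _ assms(2)] assms(5) by auto
qed

lemma residue_gap:
  assumes "1 \<le> s" "s \<le> Q" "1 \<le> t" "t \<le> Q" "(s*w) mod a < (t*w) mod a"
  shows "a + w * max 0 (s - t) \<le> a * ((t*w) mod a - (s*w) mod a)"
proof (cases "s < t")
  case True
  then show ?thesis using assms(5) a by simp
next
  case False
  then have "t < s" using assms(5) by (cases "s = t") auto
  define D where "D = s - t"
  have D: "1 \<le> D" "D \<le> Q" using \<open>t < s\<close> assms unfolding D_def by auto
  have r: "1 \<le> (D*w) mod a" "(D*w) mod a < a" and "coin_count a (D*w) \<le> a - 2"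
    using bounded[OF D] a_pos by auto
  then have q: "(D*w) div a \<le> a - 2 - (D*w) mod a" unfolding coin_count_def by simp
  have wrap: "(s*w) mod a = (t*w) mod a + (D*w) mod a - a"
    using coin_count_split[OF assms(3) \<open>t < s\<close> assms(2)] r assms(5) unfolding D_def by auto
  have "a + w * D = a + a * ((D*w) div a) + (D*w) mod a"
    using div_mult_mod_eq[of "D*w" a] by (simp add: algebra_simps)
  also have "\<dots> \<le> a + a * (a - 2 - (D*w) mod a) + (D*w) mod a"
    using mult_left_mono[OF q, of a] a_pos by linarith
  also have "\<dots> \<le> a * (a - (D*w) mod a)"
    using r by (simp add: algebra_simps)
  finally show ?thesis using wrap \<open>t < s\<close> unfolding D_def by simp
qed

text \<open>The multiples with residue at most that of \<open>Q*w\<close> have distinct residues in \<open>[L, (Q*w) mod a]\<close>;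
  the others have distinct coin counts in \<open>(coin_count a (Q*w), U]\<close>.\<close>
lemma multiples_count_bound:
  assumes Q: "1 \<le> Q"
    and bnd: "\<And>s. 1 \<le> s \<Longrightarrow> s \<le> Q \<Longrightarrow> L \<le> (s*w) mod a \<and> coin_count a (s*w) \<le> U"
  shows "Q + (Q*w) div a + L - 1 \<le> U"
proof -
  define r where "r s = (s*w) mod a" for s
  define f where "f s = coin_count a (s*w)" for s
  define Lo where "Lo = {s\<in>{1..Q}. r s \<le> r Q}"
  define Hi where "Hi = {s\<in>{1..Q}. r Q < r s}"
  have "Lo \<subseteq> {1..Q}" "Hi \<subseteq> {1..Q}" unfolding Lo_def Hi_def by auto
  then have fin: "finite Lo" "finite Hi" using finite_subset by blast+
  have "{1..Q} = Lo \<union> Hi" "Lo \<inter> Hi = {}" unfolding Lo_def Hi_def by auto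
  then have "card {1..Q} = card Lo + card Hi" using fin by (simp add: card_Un_disjoint)
  then have card_split: "Q = int (card Lo) + int (card Hi)" using Q by simp
  have "inj_on r Lo"
    unfolding inj_on_def Lo_def r_def using residues_distinct by auto
  moreover have "r ` Lo \<subseteq> {L .. r Q}"
    unfolding Lo_def r_def using bnd by auto
  ultimately have "card Lo \<le> card {L .. r Q}"
    by (metis card_inj_on_le finite_atLeastAtMost_int)
  moreover have "L \<le> r Q" using bnd[of Q] Q unfolding r_def by auto
  ultimately have card_Lo: "int (card Lo) \<le> r Q - L + 1" by simp
  have "inj_on f Hi"
  proof (rule inj_onI)
    fix s t assume st: "s \<in> Hi" "t \<in> Hi" "f s = f t"
    then have range: "1 \<le> s" "s \<le> Q" "1 \<le> t" "t \<le> Q" unfolding Hi_def by auto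
    have "\<not> r s < r t" "\<not> r t < r s"
      using coin_count_mono_residue[OF range] coin_count_mono_residue[OF range(3,4,1,2)] st(3)
      unfolding r_def f_def by auto
    then show "s = t" using residues_distinct[OF range] by (auto simp: r_def)
  qed
  moreover have "f ` Hi \<subseteq> {f Q + 1 .. U}"
  proof
    fix x assume "x \<in> f ` Hi"
    then obtain s where s: "s \<in> Hi" "x = f s" by auto
    then have "f Q < f s" "f s \<le> U"
      using coin_count_mono_residue[of Q s] bnd[of s] Q unfolding Hi_def r_def f_def by auto
    then show "x \<in> {f Q + 1 .. U}" using s by auto
  qed
  ultimately have "card Hi \<le> card {f Q + 1 .. U}"
    by (metis card_inj_on_le finite_atLeastAtMost_int)
  moreover have "f Q \<le> U" using bnd[of Q] Q unfolding f_def by auto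
  ultimately have card_Hi: "int (card Hi) \<le> U - f Q" by simp
  show ?thesis using card_split card_Lo card_Hi unfolding r_def f_def coin_count_def by linarith
qed


text \<open>Peeling off the elements of \<open>S\<close> in decreasing order of residue, each step raises the residue
  by at least \<open>a\<close>, and by \<open>w\<close> more per unit of backward index distance.\<close>
lemma residue_chain_bound:
  assumes j0: "1 \<le> j0" "j0 \<le> Q"
    and j0_min: "\<And>s. 1 \<le> s \<Longrightarrow> s \<le> Q \<Longrightarrow> (j0*w) mod a \<le> (s*w) mod a"
    and S: "finite S" "S \<subseteq> {1..Q}" "j0 \<in> S" "t \<in> S"
    and t_max: "\<forall>s\<in>S. (s*w) mod a \<le> (t*w) mod a"
  shows "a * (int (card S) - 1) + w * min (j0 - Min S + Max S - t) (Max S - Min S)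
           \<le> a * ((t*w) mod a - (j0*w) mod a)"
  using S t_max
proof (induction "card S" arbitrary: S t)
  case 0
  then show ?case by auto
next
  case (Suc n)
  have tQ: "1 \<le> t" "t \<le> Q" using Suc.prems by auto
  show ?case
  proof (cases "t = j0")
    case True
    have "S = {j0}"
    proof (intro equalityI subsetI)
      fix s assume "s \<in> S"
      then have "1 \<le> s" "s \<le> Q" "(s*w) mod a = (j0*w) mod a"
        using Suc.prems True j0_min[of s] by fastforce+
      then show "s \<in> {j0}" using residues_distinct[of s j0] j0 by auto
    qed (use Suc.prems in auto)
    then show ?thesis using True by simp
  next
    case False
    define S0 where "S0 = S - {t}"
    have S0: "finite S0" "n = card S0" "S0 \<subseteq> {1..Q}" "j0 \<in> S0" "S = insert t S0"
      using Suc False unfolding S0_def by auto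
    have "Max ((\<lambda>s. (s*w) mod a) ` S0) \<in> (\<lambda>s. (s*w) mod a) ` S0"
      using S0 by (intro Max_in) auto
    then obtain t0 where "t0 \<in> S0" "(t0*w) mod a = Max ((\<lambda>s. (s*w) mod a) ` S0)" by auto
    then have t0: "t0 \<in> S0" "\<forall>s\<in>S0. (s*w) mod a \<le> (t0*w) mod a" using S0(1) by auto
    have IH: "a * (int (card S0) - 1) + w * min (j0 - Min S0 + Max S0 - t0) (Max S0 - Min S0)
        \<le> a * ((t0*w) mod a - (j0*w) mod a)"
      using Suc.hyps(1)[OF S0(2) S0(1,3,4) t0] .
    have t0Q: "1 \<le> t0" "t0 \<le> Q" and "t0 \<noteq> t" using t0 S0 unfolding S0_def by auto
    then have "(t0*w) mod a \<noteq> (t*w) mod a" using residues_distinct tQ by blast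
    then have "(t0*w) mod a < (t*w) mod a" using Suc.prems t0 unfolding S0_def by force
    from residue_gap[OF t0Q tQ this]
    have gap: "a + w * max 0 (t0 - t) \<le> a * ((t*w) mod a - (t0*w) mod a)" .
    have "S0 \<noteq> {}" using S0 by auto
    then have "Min S = min t (Min S0)" "Max S = max t (Max S0)" using S0 by simp_all
    moreover have "Min S0 \<le> j0" "Min S0 \<le> t0" "j0 \<le> Max S0" "t0 \<le> Max S0"
      using S0 t0 by auto
    ultimately have "min (j0 - Min S + Max S - t) (Max S - Min S)
        \<le> min (j0 - Min S0 + Max S0 - t0) (Max S0 - Min S0) + max 0 (t0 - t)"
      by (simp add: min_def max_def)
    then have "w * min (j0 - Min S + Max S - t) (Max S - Min S)
        \<le> w * (min (j0 - Min S0 + Max S0 - t0) (Max S0 - Min S0) + max 0 (t0 - t))"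
      using w by (simp add: mult_left_mono)
    moreover have "int (card S) = int (card S0) + 1" using Suc.hyps(2) S0(2) by simp
    ultimately show ?thesis using IH gap by (simp add: algebra_simps)
  qed
qed

end

text \<open>If the coin count along \<open>x0 + j*w\<close> first drops to \<open>m\<close> at \<open>j = J\<close>, every step back of length \<open>s\<close>
  must have carried.\<close>
lemma coin_count_drop:
  fixes a w x0 J s m :: int
  assumes a: "a > 0" and w: "w \<ge> 0" and s: "1 \<le> s"
    and before: "coin_count a (x0 + (J - s)*w) \<ge> m + 1" and at: "coin_count a (x0 + J*w) \<le> m"
  shows "(x0 + J*w) mod a + 1 \<le> (s*w) mod a
         \<and> coin_count a (s*w) \<le> coin_count a (x0 + J*w) + a - 2 - m"
proof -
  have split: "x0 + J*w = (x0 + (J - s)*w) + s*w" by (simp add: algebra_simps)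
  have "coin_count a (s*w) \<ge> 0"
    using coin_count_ge_mod[OF a, of "s*w"] s w a by (smt (verit) mult_nonneg_nonneg pos_mod_sign)
  have carry: "(x0 + (J - s)*w) mod a + (s*w) mod a \<ge> a"
  proof (rule ccontr)
    assume "\<not> ?thesis"
    then have "coin_count a (x0 + J*w) = coin_count a (x0 + (J - s)*w) + coin_count a (s*w)"
      unfolding split by (intro coin_count_add_no_carry[OF a]) simp
    then show False using before at \<open>coin_count a (s*w) \<ge> 0\<close> by simp
  qed
  have "(x0 + (J - s)*w) mod a < a" using a by simp
  then show ?thesis
    using coin_count_add_carry[OF a carry] div_mod_add_carry(1)[OF a carry] before
    unfolding split by simp
qed

lemma drop_length_bound:
  fixes a w r0 m J :: int
  assumes a: "a \<ge> 2" and w: "w \<ge> 1" and r0: "0 \<le> r0" "r0 < a" and J: "J \<ge> 1"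
    and above: "\<And>j. 0 \<le> j \<Longrightarrow> j \<le> J - 1 \<Longrightarrow> coin_count a (r0 + j*w) \<ge> m + 1"
    and at: "coin_count a (r0 + J*w) \<le> m"
  shows "J \<le> a - 1 - m"
proof -
  have a_pos: "a > 0" using a by simp
  define \<rho> where "\<rho> = (r0 + J*w) mod a"
  have "\<rho> \<ge> 0" unfolding \<rho>_def using a_pos by simp
  have drop: "\<And>s. 1 \<le> s \<Longrightarrow> s \<le> J \<Longrightarrow>
      \<rho> + 1 \<le> (s*w) mod a \<and> coin_count a (s*w) \<le> coin_count a (r0 + J*w) + a - 2 - m"
    unfolding \<rho>_def using coin_count_drop[OF a_pos _ _ above at] w by auto
  interpret bounded_multiples a w J
    using a w drop \<open>\<rho> \<ge> 0\<close> at by unfold_locales fastforce+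
  have count: "J + (J*w) div a + (\<rho> + 1) - 1 \<le> coin_count a (r0 + J*w) + a - 2 - m"
    using multiples_count_bound[OF J drop] .
  have carry: "r0 mod a + (J*w) mod a \<ge> a"
  proof (rule ccontr)
    assume "\<not> ?thesis"
    then have "\<rho> = r0 + (J*w) mod a"
      using div_mod_add_no_carry(1)[OF a_pos] r0 unfolding \<rho>_def by (simp add: mod_pos_pos_trivial)
    then show False using drop[of J] J r0 by simp
  qed
  have "r0 div a = 0" using r0 by (simp add: div_pos_pos_trivial)
  then have "coin_count a (r0 + J*w) = (J*w) div a + 1 + \<rho>"
    using div_mod_add_carry(2)[OF a_pos carry] unfolding coin_count_def \<rho>_def by simp
  then show ?thesis using count by simp
qed

lemma drop_length_bound_small_start:
  fixes a w y m J j0 jc :: int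
  assumes a: "a \<ge> 2" and w: "w \<ge> 1" and y: "0 \<le> y" "y < a" "y \<le> m" and J: "J \<ge> 3"
    and above: "\<And>j. 1 \<le> j \<Longrightarrow> j \<le> J - 1 \<Longrightarrow> coin_count a (y + j*w) \<ge> m + 1"
    and at: "coin_count a (y + J*w) \<le> m"
    and j0: "1 \<le> j0" "j0 \<le> J - 2" "coin_count a (y + j0*w) \<le> m + 1"
    and jc: "1 \<le> jc" "jc \<le> J - 2" "(y + jc*w) mod a = a - 1"
  shows "J \<le> a - m"
proof -
  have a_pos: "a > 0" using a by simp
  define Q where "Q = J - 1"
  have Q: "Q \<ge> 1" unfolding Q_def using J by simp
  have above': "coin_count a (y + s*w) \<ge> m + 1" if "1 \<le> s" "s \<le> Q" for s
    using above that unfolding Q_def by simp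
  have drop: "1 \<le> (s*w) mod a \<and> coin_count a (s*w) \<le> a - 2" if "1 \<le> s" "s \<le> Q" for s
    using coin_count_drop[OF a_pos _ that(1) _ at] above'[of "J - s"] that w a_pos at
    unfolding Q_def by (smt (verit) pos_mod_sign)
  interpret bounded_multiples a w Q
    using a w drop by unfold_locales
  have y_small: "y mod a = y" "coin_count a y = y"
    using y by (simp_all add: mod_pos_pos_trivial coin_count_small)
  have no_carry: "y + (s*w) mod a < a \<and> coin_count a (y + s*w) = y + coin_count a (s*w)"
    if "1 \<le> s" "s \<le> Q" for s
  proof (cases "y mod a + (s*w) mod a < a")
    case True
    then show ?thesis using coin_count_add_no_carry[OF a_pos True] y_small by simp
  next
    case False
    then have "coin_count a (y + s*w) = y + coin_count a (s*w) - (a - 1)"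
      using coin_count_add_carry[OF a_pos] y_small by simp
    then show ?thesis using drop[OF that] above'[OF that] y by simp
  qed
  have j0Q: "1 \<le> j0" "j0 \<le> Q" and jcQ: "1 \<le> jc" "jc \<le> Q" using j0 jc unfolding Q_def by auto
  have jc_residue: "(jc*w) mod a = a - 1 - y"
    using no_carry[OF jcQ] div_mod_add_no_carry(1)[OF a_pos, of y "jc*w"] y_small jc by simp
  have j0_min: "(j0*w) mod a \<le> (s*w) mod a" if "1 \<le> s" "s \<le> Q" for s
  proof (rule ccontr)
    assume "\<not> ?thesis"
    then have "coin_count a (s*w) < coin_count a (j0*w)"
      using coin_count_mono_residue[OF that j0Q] by simp
    then show False using no_carry[OF that] no_carry[OF j0Q] above'[OF that] j0 by simp
  qed
  have "a * (int (card {1..Q}) - 1) + w * min (j0 - Min {1..Q} + Max {1..Q} - jc) (Max {1..Q} - Min {1..Q})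
      \<le> a * ((jc*w) mod a - (j0*w) mod a)"
    using no_carry jc_residue j0Q jcQ
    by (intro residue_chain_bound[OF j0Q j0_min]) fastforce+
  moreover have "int (card {1..Q}) = Q" "Min {1..Q} = 1" "Max {1..Q} = Q"
    using Q by (auto intro!: Min_eqI Max_eqI)
  moreover have "a * ((j0*w) div a) \<le> w * min (j0 - 1 + Q - jc) (Q - 1)"
  proof -
    have "w * j0 = a * ((j0*w) div a) + (j0*w) mod a"
      by (metis mult.commute mult_div_mod_eq)
    then have "a * ((j0*w) div a) \<le> w * j0"
      using pos_mod_sign[OF a_pos, of "j0*w"] by linarith
    also have "\<dots> \<le> w * min (j0 - 1 + Q - jc) (Q - 1)"
      using j0 jc w unfolding Q_def by (intro mult_left_mono) auto
    finally show ?thesis .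
  qed
  ultimately have "a * (Q - 1 + (j0*w) div a) \<le> a * ((jc*w) mod a - (j0*w) mod a)"
    by (simp add: algebra_simps)
  then have "Q - 1 + (j0*w) div a \<le> (jc*w) mod a - (j0*w) mod a"
    using a_pos by simp
  moreover have "y + (j0*w) div a + (j0*w) mod a \<ge> m + 1"
    using above'[OF j0Q] no_carry[OF j0Q] unfolding coin_count_def by simp
  ultimately show ?thesis using jc_residue unfolding Q_def by simp
qed

lemma coin_count_add_one:
  fixes a x :: int
  assumes "a \<ge> 2" "x mod a \<noteq> a - 1"
  shows "coin_count a (x + 1) = coin_count a x + 1"
proof -
  have "x mod a < a" "1 mod a = 1" using assms(1) by simp_all
  then have "x mod a + 1 mod a < a" using assms(2) by linarith
  then show ?thesis
    using coin_count_add_no_carry[of a x 1] coin_count_small[of 1 a] assms(1) by simp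
qed

lemma stride_le_break:
  fixes a w y n :: int and p q :: nat
  assumes a: "a > 0" and y: "0 \<le> y"
    and cover: "\<And>x. 0 \<le> x \<Longrightarrow> x < a + w \<Longrightarrow> \<exists>i\<le>p. coin_count a (x + int i * w) \<le> n"
    and above: "\<And>j. j < q \<Longrightarrow> coin_count a (y + int j * w) \<ge> n"
    and "p < q"
  shows "w \<le> y"
proof (rule ccontr)
  assume "\<not> w \<le> y"
  then obtain i where "i \<le> p" "coin_count a ((y + int i * w) + 1 * a) \<le> n"
    using cover[of "y + a"] y a by (auto simp: algebra_simps)
  then show False
    using coin_count_add_multiple[OF a, of "y + int i * w" 1] above[of i] \<open>p < q\<close> by simp
qed

lemma break_profile_bound_small_start:
  fixes a w r n :: int and p q :: nat
  assumes a: "a \<ge> 2" and w: "w \<ge> 1" and r: "0 \<le> r" "r < a" "r < n"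
    and cover: "\<And>x. 0 \<le> x \<Longrightarrow> x < a + w \<Longrightarrow> \<exists>i\<le>p. coin_count a (x + int i * w) \<le> n"
    and above: "\<And>j. 1 \<le> j \<Longrightarrow> j \<le> int q \<Longrightarrow> coin_count a (r + j*w) \<ge> n"
    and at: "coin_count a (r + (int q + 1)*w) \<le> n - 1"
    and q: "p + 2 \<le> q"
  shows "n + int q \<le> a"
proof -
  have a_pos: "a > 0" using a by simp
  have "r \<noteq> a - 1"
  proof
    assume r_last: "r = a - 1"
    have "(r + (int q + 1)*w) mod a + 1 \<le> w mod a"
      and w_small: "coin_count a w \<le> coin_count a (r + (int q + 1)*w) + a - 2 - (n - 1)"
      using coin_count_drop[OF a_pos _ _ _ at, of 1] w above[of "int q"] q by simp_all
    then have "r mod a + w mod a \<ge> a"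
      using mod_pos_pos_trivial[OF r(1,2)] r_last pos_mod_sign[OF a_pos, of "r + (int q + 1)*w"]
      by linarith
    then have "coin_count a (r + w) = coin_count a w"
      using coin_count_add_carry[OF a_pos] coin_count_small[of r a] r r_last by simp
    then show False using w_small at above[of 1] q r r_last by simp
  qed
  txt \<open>\<open>y + 1\<close> is generated at an order where \<open>y\<close> is not, which needs a carry.\<close>
  obtain ic where ic: "ic \<le> p" "coin_count a (r + w + 1 + int ic * w) \<le> n"
    using cover[of "r + w + 1"] r w \<open>r \<noteq> a - 1\<close> by fastforce
  have "(r + (int ic + 1)*w) mod a = a - 1"
    using coin_count_add_one[OF a, of "r + (int ic + 1)*w"] ic above[of "int ic + 1"] q
    by (force simp: algebra_simps)
  moreover obtain i0 where "i0 \<le> p" "coin_count a (r + w + int i0 * w) \<le> n"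
    using cover[of "r + w"] r w by fastforce
  ultimately have "int q + 1 \<le> a - (n - 1)"
    using drop_length_bound_small_start[OF a w r(1,2), of "n - 1" "int q + 1" "int i0 + 1" "int ic + 1"]
      above at q r ic by (simp add: algebra_simps)
  then show ?thesis by simp
qed

lemma break_profile_bound:
  fixes a w y n :: int and p q :: nat
  assumes a: "a \<ge> 2" and w: "w \<ge> 1" and y: "0 \<le> y" "y < a + w"
    and cover: "\<And>x. 0 \<le> x \<Longrightarrow> x < a + w \<Longrightarrow> \<exists>i\<le>p. coin_count a (x + int i * w) \<le> n"
    and above: "\<And>j. j < q \<Longrightarrow> coin_count a (y + int j * w) \<ge> n"
    and at: "coin_count a (y + int q * w) \<le> n - 1"
    and q: "p + 2 \<le> q"
  shows "n + int q \<le> a"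
proof -
  have "w \<le> y" using stride_le_break[OF _ y(1) cover above] a q by simp
  define r where "r = y - w"
  have r: "0 \<le> r" "r < a" using \<open>w \<le> y\<close> y unfolding r_def by auto
  have above': "coin_count a (r + j*w) \<ge> n" if "1 \<le> j" "j \<le> int q" for j
    using above[of "nat (j - 1)"] that unfolding r_def by (simp add: algebra_simps)
  have at': "coin_count a (r + (int q + 1)*w) \<le> n - 1"
    using at unfolding r_def by (simp add: algebra_simps)
  show ?thesis
  proof (cases "n \<le> r")
    case True
    have "coin_count a (r + j*w) \<ge> (n - 1) + 1" if "0 \<le> j" "j \<le> (int q + 1) - 1" for j
      using above'[of j] that True coin_count_small[OF r] by (cases "j = 0") auto
    from drop_length_bound[OF a w r _ this at'] show ?thesis by simp
  next
    case False
    then show ?thesis using break_profile_bound_small_start[OF a w r _ cover above' at' q] by simp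
  qed
qed

theorem theorem1:
  fixes a2 a3 n y :: int and p q :: nat
  assumes "1 < a2" and "a2 < a3"
    and "stride_generator a2 a3 n p"
    and "is_break a2 a3 n p y"
    and "\<not> canonical_break a2 a3 n p y"
    and "q = break_order a2 a3 n y"
  shows "n + int q \<le> a2"
proof -
  have gen: "has_gen a2 a3 m i x \<longleftrightarrow> coin_count a2 (x + int i * (a3 - a2)) \<le> m" if "0 \<le> x" for m i x
    using has_gen_iff_coin_count[OF _ that] assms(1,2) by simp
  have y: "0 \<le> y" "y < a3" and no_low_gen: "\<And>i. i \<le> p + 1 \<Longrightarrow> \<not> has_gen a2 a3 (n - 1) i y"
    using assms(4) unfolding is_break_def by auto
  have "\<exists>j. has_gen a2 a3 (n - 1) j y"
    using assms(4,5) unfolding canonical_break_def by auto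
  then have at: "has_gen a2 a3 (n - 1) q y"
    unfolding assms(6) break_order_def by (rule LeastI_ex)
  have above: "\<not> has_gen a2 a3 (n - 1) j y" if "j < q" for j
    using that unfolding assms(6) break_order_def by (rule not_less_Least)
  have "p + 2 \<le> q" using no_low_gen[of q] at by (cases "q \<le> p + 1") auto
  moreover have "\<exists>i\<le>p. coin_count a2 (x + int i * (a3 - a2)) \<le> n" if "0 \<le> x" "x < a2 + (a3 - a2)" for x
    using assms(3) gen that unfolding stride_generator_def by auto
  ultimately show ?thesis
    using break_profile_bound[of a2 "a3 - a2" y p n q] assms(1,2) y above at gen[OF y(1)]
    by fastforce
qed

end
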